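(* Let $\mathrm{G}$ be a finite undirected graph with vertex set $\mathrm{V}(\mathrm{G})$ of size $N$, with no isolated vertices, maximum degree $d_{\max}$ and minimum degree $d_{\min}$. Let $0 \le \lambda \le 1$ and $0 < p < 1$, and let $\mathcal{K}^{\lambda,0}_p(\mathrm{G}) = [\mathrm{K}^{\lambda,0}_p(k,l)]_{k,l\in\mathrm{V}(\mathrm{G})}$. Then, with $\rho = (1-p)\lambda$ and $\Gamma(\mathbf{A}) = \sum_{i=0}^\infty (i+1)\mathbf{A}^i$, the entrywise inequalities $$\Gamma\!\left(\frac{\rho}{d_{\max}}\mathrm{Adj}(\mathrm{G})\right) \le \mathcal{K}^{\lambda,0}_p(\mathrm{G}) \le \Gamma\!\left(\frac{\rho}{d_{\min}}\mathrm{Adj}(\mathrm{G})\right)$$ hold (series with nonnegative entries are interpreted entrywise in $[0,\infty]$).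
   Context: A random walk $\omega(h)$ with stopping probability $p$ starting at $h$ is the sequence $(j_1 = h, j_2, \dots, j_t)$ where, independently at each step, the walk stops with probability $p$ and otherwise moves from its current vertex to a uniformly random neighbour. A prefix sub-walk of $(j_1,\dots,j_t)$ is a walk $(j_1,\dots,j_r)$ with $1\le r\le t$ (or the empty walk); its length is its number of edges $r-1$. The frequency vector $f^{\omega(h),\lambda}_h \in \mathbb{R}^{\mathrm{V}(\mathrm{G})}$ is $f^{\omega(h),\lambda}_h(i) = \sum_{e\in \mathrm{L}^{\omega(h)}(i)} \lambda^e$, where $\mathrm{L}^{\omega(h)}(i)$ is the multiset of lengths of the prefix sub-walks of $\omega(h)$ that end at $i$. For independent random walks $\omega(k),\omega(l)$ with stopping probability $p$ started at $k$ and $l$, the kernel (with $\alpha = 0$) is $\mathrm{K}^{\lambda,0}_p(k,l) = \mathbb{E}_{\omega(k)}[f^{\omega(k),\lambda}_k]\,\big(\mathbb{E}_{\omega(l)}[f^{\omega(l),\lambda}_l]\big)^\top$. $\mathrm{Adj}(\mathrm{G})$ is the adjacency matrix. *)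

theory Defs
  imports "HOL-Analysis.Analysis"
begin

definition ugraph :: "'a set \<Rightarrow> ('a \<Rightarrow> 'a \<Rightarrow> bool) \<Rightarrow> bool" where
  "ugraph V E \<longleftrightarrow> finite V \<and> (\<forall>x y. E x y \<longrightarrow> x \<in> V \<and> y \<in> V \<and> E y x \<and> x \<noteq> y)"

definition deg :: "'a set \<Rightarrow> ('a \<Rightarrow> 'a \<Rightarrow> bool) \<Rightarrow> 'a \<Rightarrow> nat" where
  "deg V E v = card {u \<in> V. E v u}"

definition no_isolated :: "'a set \<Rightarrow> ('a \<Rightarrow> 'a \<Rightarrow> bool) \<Rightarrow> bool" where
  "no_isolated V E \<longleftrightarrow> (\<forall>v\<in>V. \<exists>u. E v u)"

definition dmax :: "'a set \<Rightarrow> ('a \<Rightarrow> 'a \<Rightarrow> bool) \<Rightarrow> nat" where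
  "dmax V E = Max (deg V E ` V)"

definition dmin :: "'a set \<Rightarrow> ('a \<Rightarrow> 'a \<Rightarrow> bool) \<Rightarrow> nat" where
  "dmin V E = Min (deg V E ` V)"

text \<open>Probability that the random walk with stopping probability p is exactly the
  vertex sequence w = (j_1,...,j_t): it moves t-1 times (each with probability 1-p,
  to a uniformly random neighbour) and then stops (probability p).\<close>
definition walk_prob :: "'a set \<Rightarrow> ('a \<Rightarrow> 'a \<Rightarrow> bool) \<Rightarrow> real \<Rightarrow> 'a list \<Rightarrow> real" where
  "walk_prob V E p w =
     p * (1 - p) ^ (length w - 1) *
     (\<Prod>s<length w - 1. if E (w ! s) (w ! Suc s) then 1 / real (deg V E (w ! s)) else 0)"

text \<open>Frequency vector: sum of lam^(length of prefix sub-walk) over prefix sub-walks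
  ending at i; the prefix (j_1..j_{r+1}) has length r.\<close>
definition freq :: "real \<Rightarrow> 'a list \<Rightarrow> 'a \<Rightarrow> real" where
  "freq lam w i = (\<Sum>r<length w. if w ! r = i then lam ^ r else 0)"

definition exp_freq :: "'a set \<Rightarrow> ('a \<Rightarrow> 'a \<Rightarrow> bool) \<Rightarrow> real \<Rightarrow> real \<Rightarrow> 'a \<Rightarrow> 'a \<Rightarrow> ennreal" where
  "exp_freq V E p lam h i =
     (\<integral>\<^sup>+ w. (if w \<noteq> [] \<and> hd w = h then ennreal (walk_prob V E p w * freq lam w i) else 0)
        \<partial>count_space UNIV)"

definition rw_kernel :: "'a set \<Rightarrow> ('a \<Rightarrow> 'a \<Rightarrow> bool) \<Rightarrow> real \<Rightarrow> real \<Rightarrow> 'a \<Rightarrow> 'a \<Rightarrow> ennreal" where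
  "rw_kernel V E p lam k l = (\<Sum>i\<in>V. exp_freq V E p lam k i * exp_freq V E p lam l i)"

fun adj_pow :: "'a set \<Rightarrow> ('a \<Rightarrow> 'a \<Rightarrow> bool) \<Rightarrow> nat \<Rightarrow> 'a \<Rightarrow> 'a \<Rightarrow> real" where
  "adj_pow V E 0 k l = (if k = l then 1 else 0)"
| "adj_pow V E (Suc n) k l = (\<Sum>u\<in>V. (if E k u then 1 else 0) * adj_pow V E n u l)"

definition Gamma_adj :: "'a set \<Rightarrow> ('a \<Rightarrow> 'a \<Rightarrow> bool) \<Rightarrow> real \<Rightarrow> 'a \<Rightarrow> 'a \<Rightarrow> ennreal" where
  "Gamma_adj V E c k l = (\<Sum>i. ennreal (real (i + 1) * c ^ i * adj_pow V E i k l))"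

end

theory Submission
  imports Defs
begin

(* Let P be the transition matrix of the simple random walk and \<rho> = (1 - p) \<lambda>.
   A walk stopped after n steps has probability p (1 - p)^n times its path weight, and the
   path weights of the n-step walks from h that sit at i after r steps add up to P^r(h, i).
   Summing out the geometric stopping time gives E[f_h](i) = \<Sum>_r \<rho>^r P^r(h, i).
   Entrywise Adj / d_max \<le> P \<le> Adj / d_min, which sandwiches these series between the
   same series for (\<rho> / d_max) Adj and (\<rho> / d_min) Adj. Finally, for a symmetric matrix A,
   \<Sum>_i (\<Sum>_r A^r)(k, i) (\<Sum>_s A^s)(l, i) = \<Sum>_n (n + 1) A^n(k, l) = \<Gamma>(A)(k, l). *)

lemma ennreal_suminf_swap:
  fixes f :: "nat \<Rightarrow> nat \<Rightarrow> ennreal"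
  shows "(\<Sum>i. \<Sum>j. f i j) = (\<Sum>j. \<Sum>i. f i j)"
proof -
  have "(\<Sum>j. \<Sum>i. f i j) = (\<integral>\<^sup>+j. (\<Sum>i. f i j) \<partial>count_space UNIV)"
    by (simp add: nn_integral_count_space_nat)
  also have "\<dots> = (\<Sum>i. \<integral>\<^sup>+j. f i j \<partial>count_space UNIV)"
    by (rule nn_integral_suminf) simp
  also have "\<dots> = (\<Sum>i. \<Sum>j. f i j)"
    by (simp add: nn_integral_count_space_nat)
  finally show ?thesis ..
qed

lemma ennreal_suminf_triangle:
  fixes f :: "nat \<Rightarrow> nat \<Rightarrow> ennreal"
  shows "(\<Sum>n. \<Sum>r\<le>n. f n r) = (\<Sum>r. \<Sum>m. f (m + r) r)"
proof -
  have "(\<Sum>r. if r \<le> n then f n r else 0) = (\<Sum>r\<le>n. f n r)" for n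
    by (subst suminf_finite[of "{..n}"]) auto
  then have "(\<Sum>n. \<Sum>r\<le>n. f n r) = (\<Sum>n. \<Sum>r. if r \<le> n then f n r else 0)"
    by simp
  also have "\<dots> = (\<Sum>r. \<Sum>n. if r \<le> n then f n r else 0)"
    by (rule ennreal_suminf_swap)
  also have "\<dots> = (\<Sum>r. \<Sum>m. f (m + r) r)"
  proof (rule suminf_cong)
    fix r
    show "(\<Sum>n. if r \<le> n then f n r else 0) = (\<Sum>m. f (m + r) r)"
      using suminf_offset[of "\<lambda>n. if r \<le> n then f n r else 0" r] by simp
  qed
  finally show ?thesis .
qed

lemma ennreal_suminf_geometric_partial_sums:
  fixes p :: real and x :: "nat \<Rightarrow> real"
  assumes "0 < p" "p \<le> 1" and x_nonneg: "\<And>r. 0 \<le> x r"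
  shows "(\<Sum>n. ennreal (p * (1 - p) ^ n * (\<Sum>r\<le>n. x r))) = (\<Sum>r. ennreal ((1 - p) ^ r * x r))"
proof -
  have geometric: "(\<Sum>m. ennreal (p * (1 - p) ^ m)) = 1"
  proof -
    have "(\<lambda>m. p * (1 - p) ^ m) sums (p * (1 / (1 - (1 - p))))"
      using assms by (intro sums_mult geometric_sums) simp
    then have "(\<lambda>m. ennreal (p * (1 - p) ^ m)) sums ennreal 1"
      using assms by (subst sums_ennreal) auto
    then show ?thesis
      by (simp add: sums_iff)
  qed
  have "(\<Sum>n. ennreal (p * (1 - p) ^ n * (\<Sum>r\<le>n. x r)))
      = (\<Sum>n. \<Sum>r\<le>n. ennreal (p * (1 - p) ^ n * x r))"
    using assms by (simp add: sum_distrib_left)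
  also have "\<dots> = (\<Sum>r. \<Sum>m. ennreal (p * (1 - p) ^ (m + r) * x r))"
    by (rule ennreal_suminf_triangle)
  also have "\<dots> = (\<Sum>r. \<Sum>m. ennreal (p * (1 - p) ^ m) * ennreal ((1 - p) ^ r * x r))"
    using assms by (intro suminf_cong) (simp add: ennreal_mult[symmetric] power_add mult_ac)
  also have "\<dots> = (\<Sum>r. ennreal ((1 - p) ^ r * x r))"
    by (simp add: geometric)
  finally show ?thesis .
qed

lemma nn_integral_count_space_by_level:
  fixes f :: "'b \<Rightarrow> ennreal" and level :: "'b \<Rightarrow> nat"
  assumes finite: "\<And>n. finite (S n)"
    and level: "\<And>n x. x \<in> S n \<Longrightarrow> level x = n"
    and support: "\<And>x. f x \<noteq> 0 \<Longrightarrow> x \<in> S (level x)"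
  shows "(\<integral>\<^sup>+x. f x \<partial>count_space UNIV) = (\<Sum>n. \<Sum>x\<in>S n. f x)"
proof -
  have "(\<Sum>n. if level x = n then f x else 0) = f x" for x
    by (subst suminf_finite[of "{level x}"]) auto
  then have "(\<integral>\<^sup>+x. f x \<partial>count_space UNIV)
      = (\<integral>\<^sup>+x. (\<Sum>n. if level x = n then f x else 0) \<partial>count_space UNIV)"
    by simp
  also have "\<dots> = (\<Sum>n. \<integral>\<^sup>+x. (if level x = n then f x else 0) \<partial>count_space UNIV)"
    by (rule nn_integral_suminf) simp
  also have "\<dots> = (\<Sum>n. \<Sum>x\<in>S n. f x)"
  proof (rule suminf_cong)
    fix n
    have "(\<integral>\<^sup>+x. (if level x = n then f x else 0) \<partial>count_space UNIV)
        = (\<Sum>x\<in>S n. if level x = n then f x else 0)"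
      using finite support by (intro nn_integral_count_space') fastforce+
    then show "(\<integral>\<^sup>+x. (if level x = n then f x else 0) \<partial>count_space UNIV) = (\<Sum>x\<in>S n. f x)"
      using level by simp
  qed
  finally show ?thesis .
qed

fun mat_pow :: "'a set \<Rightarrow> ('a \<Rightarrow> 'a \<Rightarrow> real) \<Rightarrow> nat \<Rightarrow> 'a \<Rightarrow> 'a \<Rightarrow> real" where
  "mat_pow V M 0 k l = of_bool (k = l)"
| "mat_pow V M (Suc n) k l = (\<Sum>u\<in>V. M k u * mat_pow V M n u l)"

lemma mat_pow_nonneg: "(\<And>a b. 0 \<le> M a b) \<Longrightarrow> 0 \<le> mat_pow V M n k l"
  by (induction n arbitrary: k) (auto intro!: sum_nonneg)

lemma mat_pow_mono:
  assumes "\<And>a b. 0 \<le> M a b" and "\<And>a b. M a b \<le> M' a b"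
  shows "mat_pow V M n k l \<le> mat_pow V M' n k l"
proof (induction n arbitrary: k)
  case (Suc n)
  show ?case
    using Suc.IH assms by (auto intro!: sum_mono mult_mono mat_pow_nonneg intro: order_trans[OF assms])
qed simp

lemma mat_pow_scale: "mat_pow V (\<lambda>a b. c * M a b) n k l = c ^ n * mat_pow V M n k l"
  by (induction n arbitrary: k) (simp_all add: sum_distrib_left mult_ac)

lemma mat_pow_add:
  assumes "finite V" "k \<in> V"
  shows "mat_pow V M (r + s) k l = (\<Sum>i\<in>V. mat_pow V M r k i * mat_pow V M s i l)"
  using assms(2)
proof (induction r arbitrary: k)
  case 0
  then show ?case
    using assms(1) by (simp add: Int_def Collect_conv_if)
next
  case (Suc r)
  have "mat_pow V M (Suc r + s) k l
      = (\<Sum>u\<in>V. \<Sum>i\<in>V. M k u * mat_pow V M r u i * mat_pow V M s i l)"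
    using Suc.IH by (simp add: sum_distrib_left mult.assoc)
  also have "\<dots> = (\<Sum>i\<in>V. mat_pow V M (Suc r) k i * mat_pow V M s i l)"
    by (subst sum.swap) (simp add: sum_distrib_right)
  finally show ?case .
qed

lemma mat_pow_1: "finite V \<Longrightarrow> l \<in> V \<Longrightarrow> mat_pow V M 1 k l = M k l"
  by (simp add: Int_def Collect_conv_if)

lemma mat_pow_sym:
  assumes "finite V" and sym: "\<And>a b. a \<in> V \<Longrightarrow> b \<in> V \<Longrightarrow> M a b = M b a"
    and "k \<in> V" "l \<in> V"
  shows "mat_pow V M n k l = mat_pow V M n l k"
  using assms(3,4)
proof (induction n arbitrary: k l)
  case (Suc n)
  have "mat_pow V M (Suc n) k l = (\<Sum>u\<in>V. mat_pow V M n l u * M u k)"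
    using Suc sym by (auto simp: mult.commute intro!: sum.cong)
  also have "\<dots> = (\<Sum>u\<in>V. mat_pow V M n l u * mat_pow V M 1 u k)"
    using mat_pow_1[OF assms(1) Suc.prems(1)] by simp
  also have "\<dots> = mat_pow V M (Suc n) l k"
    using mat_pow_add[OF assms(1) Suc.prems(2), of M n 1 k] by simp
  finally show ?case .
qed simp

definition neumann_series :: "'a set \<Rightarrow> ('a \<Rightarrow> 'a \<Rightarrow> real) \<Rightarrow> 'a \<Rightarrow> 'a \<Rightarrow> ennreal" where
  "neumann_series V M k l = (\<Sum>r. ennreal (mat_pow V M r k l))"

lemma neumann_series_mono:
  assumes "\<And>a b. 0 \<le> M a b" and "\<And>a b. M a b \<le> M' a b"
  shows "neumann_series V M k l \<le> neumann_series V M' k l"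
  unfolding neumann_series_def
  using assms by (intro suminf_le ennreal_leI mat_pow_mono summableI)

lemma neumann_series_product:
  assumes "finite V" and nonneg: "\<And>a b. 0 \<le> M a b"
    and sym: "\<And>a b. a \<in> V \<Longrightarrow> b \<in> V \<Longrightarrow> M a b = M b a"
    and "k \<in> V" "l \<in> V"
  shows "(\<Sum>i\<in>V. neumann_series V M k i * neumann_series V M l i)
       = (\<Sum>n. of_nat (n + 1) * ennreal (mat_pow V M n k l))"
proof -
  have product: "(\<Sum>i\<in>V. ennreal (mat_pow V M r k i) * ennreal (mat_pow V M s l i))
      = ennreal (mat_pow V M (s + r) k l)" for r s
  proof -
    have "(\<Sum>i\<in>V. ennreal (mat_pow V M r k i) * ennreal (mat_pow V M s l i))
        = ennreal (\<Sum>i\<in>V. mat_pow V M r k i * mat_pow V M s i l)"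
      using nonneg mat_pow_sym[OF assms(1) sym _ assms(5)]
      by (simp add: ennreal_mult[symmetric] mat_pow_nonneg sum_nonneg)
    then show ?thesis
      using mat_pow_add[OF assms(1,4)] by (simp add: add.commute)
  qed
  have "(\<Sum>i\<in>V. neumann_series V M k i * neumann_series V M l i)
      = (\<Sum>i\<in>V. \<Sum>r. \<Sum>s. ennreal (mat_pow V M r k i) * ennreal (mat_pow V M s l i))"
    unfolding neumann_series_def by (simp only: ennreal_suminf_multc ennreal_suminf_cmult)
  also have "\<dots> = (\<Sum>r. \<Sum>s. \<Sum>i\<in>V. ennreal (mat_pow V M r k i) * ennreal (mat_pow V M s l i))"
    by (simp only: suminf_sum[OF summableI])
  also have "\<dots> = (\<Sum>r. \<Sum>m. ennreal (mat_pow V M (m + r) k l))"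
    by (simp only: product)
  also have "\<dots> = (\<Sum>n. \<Sum>r\<le>n. ennreal (mat_pow V M n k l))"
    by (rule ennreal_suminf_triangle[symmetric])
  also have "\<dots> = (\<Sum>n. of_nat (n + 1) * ennreal (mat_pow V M n k l))"
    by simp
  finally show ?thesis .
qed

definition path_weight :: "('a \<Rightarrow> 'a \<Rightarrow> real) \<Rightarrow> 'a list \<Rightarrow> real" where
  "path_weight M w = (\<Prod>s<length w - 1. M (w ! s) (w ! Suc s))"

definition walks :: "'a set \<Rightarrow> nat \<Rightarrow> 'a \<Rightarrow> 'a list set" where
  "walks V n h = {w. set w \<subseteq> V \<and> length w = Suc n \<and> hd w = h}"

lemma path_weight_Cons: "w \<noteq> [] \<Longrightarrow> path_weight M (h # w) = M h (hd w) * path_weight M w"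
  by (cases w) (simp_all add: path_weight_def prod.lessThan_Suc_shift del: prod.lessThan_Suc)

lemma path_weight_Cons_walks: "w \<in> walks V n u \<Longrightarrow> path_weight M (h # w) = M h u * path_weight M w"
  by (cases w) (auto simp: walks_def path_weight_Cons)

lemma finite_walks: "finite V \<Longrightarrow> finite (walks V n h)"
  unfolding walks_def by (rule finite_subset[OF _ finite_lists_length_eq]) auto

lemma walks_0: "h \<in> V \<Longrightarrow> walks V 0 h = {[h]}"
  by (auto simp: walks_def length_Suc_conv)

lemma sum_walks_Suc:
  assumes "finite V" "h \<in> V"
  shows "(\<Sum>w\<in>walks V (Suc n) h. g w) = (\<Sum>u\<in>V. \<Sum>w\<in>walks V n u. g (h # w))"
proof -
  have "walks V (Suc n) h = Cons h ` (\<Union>u\<in>V. walks V n u)"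
    using assms(2) by (auto simp: walks_def length_Suc_conv image_iff)
  then have "(\<Sum>w\<in>walks V (Suc n) h. g w) = (\<Sum>w\<in>(\<Union>u\<in>V. walks V n u). g (h # w))"
    by (simp add: sum.reindex)
  also have "\<dots> = (\<Sum>u\<in>V. \<Sum>w\<in>walks V n u. g (h # w))"
    using assms(1) finite_walks[OF assms(1)] by (intro sum.UNION_disjoint) (auto simp: walks_def)
  finally show ?thesis .
qed

context
  fixes V :: "'a set" and M :: "'a \<Rightarrow> 'a \<Rightarrow> real"
  assumes finite_V: "finite V" and stochastic: "\<And>a. a \<in> V \<Longrightarrow> (\<Sum>u\<in>V. M a u) = 1"
begin

lemma sum_path_weight_walks: "h \<in> V \<Longrightarrow> (\<Sum>w\<in>walks V n h. path_weight M w) = 1"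
proof (induction n arbitrary: h)
  case 0
  then show ?case by (simp add: walks_0 path_weight_def)
next
  case (Suc n)
  have "(\<Sum>w\<in>walks V (Suc n) h. path_weight M w) = (\<Sum>u\<in>V. M h u * (\<Sum>w\<in>walks V n u. path_weight M w))"
    using Suc.prems finite_V
    by (simp add: sum_walks_Suc path_weight_Cons_walks sum_distrib_left cong: sum.cong)
  then show ?case
    using Suc by (simp add: stochastic)
qed

lemma sum_path_weight_walks_nth:
  assumes "h \<in> V" "r \<le> n"
  shows "(\<Sum>w\<in>walks V n h. path_weight M w * of_bool (w ! r = i)) = mat_pow V M r h i"
  using assms
proof (induction n arbitrary: h r)
  case 0
  then show ?case by (simp add: walks_0 path_weight_def)
next
  case (Suc n)
  have "(\<Sum>w\<in>walks V (Suc n) h. path_weight M w * of_bool (w ! r = i))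
      = (\<Sum>u\<in>V. M h u * (\<Sum>w\<in>walks V n u. path_weight M w * of_bool ((h # w) ! r = i)))"
    using Suc.prems finite_V
    by (simp add: sum_walks_Suc path_weight_Cons_walks sum_distrib_left mult.assoc cong: sum.cong)
  also have "\<dots> = mat_pow V M r h i"
  proof (cases r)
    case 0
    then show ?thesis
      using Suc.prems by (simp add: sum_path_weight_walks stochastic flip: sum_distrib_right)
  next
    case (Suc r')
    then show ?thesis
      using Suc.IH \<open>r \<le> Suc n\<close> by simp
  qed
  finally show ?case .
qed

end

definition adj_mat :: "('a \<Rightarrow> 'a \<Rightarrow> bool) \<Rightarrow> 'a \<Rightarrow> 'a \<Rightarrow> real" where
  "adj_mat E a b = (if E a b then 1 else 0)"

definition transition :: "'a set \<Rightarrow> ('a \<Rightarrow> 'a \<Rightarrow> bool) \<Rightarrow> 'a \<Rightarrow> 'a \<Rightarrow> real" where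
  "transition V E a b = (if E a b then 1 / real (deg V E a) else 0)"

lemma adj_pow_eq_mat_pow: "adj_pow V E n k l = mat_pow V (adj_mat E) n k l"
  by (induction n arbitrary: k) (simp_all add: adj_mat_def)

lemma adj_mat_nonneg: "0 \<le> adj_mat E a b"
  by (simp add: adj_mat_def)

lemma transition_nonneg: "0 \<le> transition V E a b"
  by (simp add: transition_def)

lemma walk_prob_eq_path_weight:
  "walk_prob V E p w = p * (1 - p) ^ (length w - 1) * path_weight (transition V E) w"
  by (simp add: walk_prob_def path_weight_def transition_def)

lemma walk_prob_mult_freq:
  assumes "length w = Suc n"
  shows "walk_prob V E p w * freq lam w i
       = p * (1 - p) ^ n * (\<Sum>r\<le>n. lam ^ r * (path_weight (transition V E) w * of_bool (w ! r = i)))"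
  using assms
  by (auto simp: walk_prob_eq_path_weight freq_def lessThan_Suc_atMost sum_distrib_left intro!: sum.cong)

context
  fixes V :: "'a set" and E :: "'a \<Rightarrow> 'a \<Rightarrow> bool"
  assumes graph: "ugraph V E" and no_isolated: "no_isolated V E"
begin

lemma edge_in_V: "E a b \<Longrightarrow> a \<in> V \<and> b \<in> V \<and> E b a"
  using graph by (simp add: ugraph_def)

lemma finite_V: "finite V"
  using graph by (simp add: ugraph_def)

lemma deg_pos: "v \<in> V \<Longrightarrow> 0 < deg V E v"
  using no_isolated finite_V edge_in_V
  by (fastforce simp: no_isolated_def deg_def card_gt_0_iff)

lemma transition_row_sum:
  assumes "a \<in> V"
  shows "(\<Sum>u\<in>V. transition V E a u) = 1"
proof -
  have "(\<Sum>u\<in>V. transition V E a u) = (\<Sum>u\<in>{u \<in> V. E a u}. 1 / real (deg V E a))"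
    unfolding transition_def by (rule sum.inter_filter[OF finite_V, symmetric])
  also have "\<dots> = 1"
    using deg_pos[OF assms] by (simp add: deg_def)
  finally show ?thesis .
qed

lemma adj_mat_div_dmax_le_transition: "adj_mat E a b / real (dmax V E) \<le> transition V E a b"
proof (cases "E a b")
  case True
  then have "a \<in> V" using edge_in_V by blast
  then have "deg V E a \<le> dmax V E"
    unfolding dmax_def using finite_V by (intro Max_ge) auto
  then show ?thesis
    using True deg_pos[OF \<open>a \<in> V\<close>] by (simp add: adj_mat_def transition_def frac_le)
qed (simp add: adj_mat_def transition_def)

lemma transition_le_adj_mat_div_dmin: "transition V E a b \<le> adj_mat E a b / real (dmin V E)"
proof (cases "E a b")
  case True
  then have "a \<in> V" using edge_in_V by blast
  then have "dmin V E \<in> deg V E ` V" "dmin V E \<le> deg V E a"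
    unfolding dmin_def using finite_V by (auto intro: Min_in Min_le)
  then have "0 < dmin V E" "dmin V E \<le> deg V E a"
    using deg_pos by auto
  then show ?thesis
    using True by (simp add: adj_mat_def transition_def frac_le)
qed (simp add: adj_mat_def transition_def)

lemma path_weight_nonzero_in_V:
  assumes "w \<noteq> []" "hd w \<in> V" "path_weight (transition V E) w \<noteq> 0"
  shows "set w \<subseteq> V"
proof
  fix x assume "x \<in> set w"
  then obtain j where j: "j < length w" "w ! j = x"
    by (auto simp: in_set_conv_nth)
  show "x \<in> V"
  proof (cases j)
    case 0
    then show ?thesis using j assms(1,2) by (simp add: hd_conv_nth)
  next
    case (Suc j')
    then have "E (w ! j') (w ! j)"
      using j assms(3) by (auto simp: path_weight_def transition_def split: if_splits)
    then show ?thesis using edge_in_V j by auto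
  qed
qed

lemma sum_walks_walk_prob_freq:
  assumes "h \<in> V"
  shows "(\<Sum>w\<in>walks V n h. walk_prob V E p w * freq lam w i)
       = p * (1 - p) ^ n * (\<Sum>r\<le>n. lam ^ r * mat_pow V (transition V E) r h i)"
proof -
  have "(\<Sum>w\<in>walks V n h. walk_prob V E p w * freq lam w i)
      = (\<Sum>w\<in>walks V n h. p * (1 - p) ^ n *
           (\<Sum>r\<le>n. lam ^ r * (path_weight (transition V E) w * of_bool (w ! r = i))))"
    by (intro sum.cong refl walk_prob_mult_freq) (simp add: walks_def)
  also have "\<dots> = p * (1 - p) ^ n * (\<Sum>r\<le>n. \<Sum>w\<in>walks V n h.
           lam ^ r * (path_weight (transition V E) w * of_bool (w ! r = i)))"
    by (subst sum.swap) (simp add: sum_distrib_left)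
  also have "\<dots> = p * (1 - p) ^ n * (\<Sum>r\<le>n. lam ^ r * mat_pow V (transition V E) r h i)"
    using assms finite_V transition_row_sum
    by (simp add: sum_path_weight_walks_nth flip: sum_distrib_left)
  finally show ?thesis .
qed

lemma exp_freq_eq_neumann_series:
  assumes "h \<in> V" "0 < p" "p \<le> 1" "0 \<le> lam"
  shows "exp_freq V E p lam h i = neumann_series V (\<lambda>a b. (1 - p) * lam * transition V E a b) h i"
proof -
  let ?f = "\<lambda>w. if w \<noteq> [] \<and> hd w = h then ennreal (walk_prob V E p w * freq lam w i) else 0"
  have freq_nonneg: "0 \<le> freq lam w i" for w
    using assms by (simp add: freq_def sum_nonneg)
  have walk_prob_nonneg: "0 \<le> walk_prob V E p w" for w
    using assms by (simp add: walk_prob_eq_path_weight path_weight_def prod_nonneg transition_nonneg)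
  have support: "w \<in> walks V (length w - 1) h" if "?f w \<noteq> 0" for w
  proof -
    have "w \<noteq> []" "hd w = h" "walk_prob V E p w \<noteq> 0"
      using that by (auto split: if_splits)
    then show ?thesis
      using path_weight_nonzero_in_V[of w] assms(1) by (auto simp: walks_def walk_prob_eq_path_weight)
  qed
  have "exp_freq V E p lam h i = (\<Sum>n. \<Sum>w\<in>walks V n h. ?f w)"
    unfolding exp_freq_def
  proof (rule nn_integral_count_space_by_level)
    show "finite (walks V n h)" for n
      by (rule finite_walks[OF finite_V])
    show "length w - 1 = n" if "w \<in> walks V n h" for n w
      using that by (simp add: walks_def)
  qed (fact support)
  also have "\<dots> = (\<Sum>n. ennreal (\<Sum>w\<in>walks V n h. walk_prob V E p w * freq lam w i))"
  proof (rule suminf_cong)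
    fix n
    have "(\<Sum>w\<in>walks V n h. ?f w) = (\<Sum>w\<in>walks V n h. ennreal (walk_prob V E p w * freq lam w i))"
      by (intro sum.cong refl) (auto simp: walks_def)
    also have "\<dots> = ennreal (\<Sum>w\<in>walks V n h. walk_prob V E p w * freq lam w i)"
      using freq_nonneg walk_prob_nonneg by (intro sum_ennreal) simp
    finally show "(\<Sum>w\<in>walks V n h. ?f w) = ennreal (\<Sum>w\<in>walks V n h. walk_prob V E p w * freq lam w i)" .
  qed
  also have "\<dots> = (\<Sum>n. ennreal (p * (1 - p) ^ n * (\<Sum>r\<le>n. lam ^ r * mat_pow V (transition V E) r h i)))"
    by (simp only: sum_walks_walk_prob_freq[OF assms(1)])
  also have "\<dots> = (\<Sum>r. ennreal ((1 - p) ^ r * (lam ^ r * mat_pow V (transition V E) r h i)))"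
    using assms by (intro ennreal_suminf_geometric_partial_sums mult_nonneg_nonneg mat_pow_nonneg)
      (simp_all add: transition_nonneg)
  also have "\<dots> = neumann_series V (\<lambda>a b. (1 - p) * lam * transition V E a b) h i"
    by (simp add: neumann_series_def mat_pow_scale power_mult_distrib mult_ac)
  finally show ?thesis .
qed

lemma Gamma_adj_eq_neumann_series_product:
  assumes "0 \<le> c" "k \<in> V" "l \<in> V"
  shows "Gamma_adj V E c k l
       = (\<Sum>i\<in>V. neumann_series V (\<lambda>a b. c * adj_mat E a b) k i
                 * neumann_series V (\<lambda>a b. c * adj_mat E a b) l i)"
proof -
  have "Gamma_adj V E c k l = (\<Sum>n. of_nat (n + 1) * ennreal (mat_pow V (\<lambda>a b. c * adj_mat E a b) n k l))"
    unfolding Gamma_adj_def using assms(1)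
    by (simp add: mat_pow_scale adj_pow_eq_mat_pow ennreal_mult mat_pow_nonneg adj_mat_nonneg
        ennreal_of_nat_eq_real_of_nat mult.assoc)
  also have "\<dots> = (\<Sum>i\<in>V. neumann_series V (\<lambda>a b. c * adj_mat E a b) k i
                 * neumann_series V (\<lambda>a b. c * adj_mat E a b) l i)"
    using assms finite_V edge_in_V
    by (intro neumann_series_product[symmetric]) (auto simp: adj_mat_def)
  finally show ?thesis .
qed

end

theorem theorem4p2:
  fixes V :: "'a set" and E :: "'a \<Rightarrow> 'a \<Rightarrow> bool" and lam p :: real
  assumes "ugraph V E" and "no_isolated V E"
    and "0 \<le> lam" and "lam \<le> 1" and "0 < p" and "p < 1"
  shows "\<forall>k\<in>V. \<forall>l\<in>V.
           Gamma_adj V E ((1 - p) * lam / real (dmax V E)) k l \<le> rw_kernel V E p lam k l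
         \<and> rw_kernel V E p lam k l \<le> Gamma_adj V E ((1 - p) * lam / real (dmin V E)) k l"
proof (intro ballI conjI)
  fix k l assume "k \<in> V" "l \<in> V"
  let ?\<rho> = "(1 - p) * lam"
  let ?N = "\<lambda>c. neumann_series V (\<lambda>a b. c * adj_mat E a b)"
  let ?K = "neumann_series V (\<lambda>a b. ?\<rho> * transition V E a b)"
  have "0 \<le> ?\<rho>" using assms by simp
  have kernel: "rw_kernel V E p lam k l = (\<Sum>i\<in>V. ?K k i * ?K l i)"
    using assms \<open>k \<in> V\<close> \<open>l \<in> V\<close> by (simp add: rw_kernel_def exp_freq_eq_neumann_series)
  have "?N (?\<rho> / dmax V E) h i \<le> ?K h i" for h i
    using mult_left_mono[OF adj_mat_div_dmax_le_transition[OF assms(1,2)] \<open>0 \<le> ?\<rho>\<close>] \<open>0 \<le> ?\<rho>\<close>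
    by (intro neumann_series_mono) (simp_all add: adj_mat_nonneg)
  then show "Gamma_adj V E (?\<rho> / dmax V E) k l \<le> rw_kernel V E p lam k l"
    using assms(1,2) \<open>0 \<le> ?\<rho>\<close> \<open>k \<in> V\<close> \<open>l \<in> V\<close>
    by (simp add: kernel Gamma_adj_eq_neumann_series_product) (intro sum_mono mult_mono, auto)
  have "?K h i \<le> ?N (?\<rho> / dmin V E) h i" for h i
    using mult_left_mono[OF transition_le_adj_mat_div_dmin[OF assms(1,2)] \<open>0 \<le> ?\<rho>\<close>] \<open>0 \<le> ?\<rho>\<close>
    by (intro neumann_series_mono) (simp_all add: transition_nonneg)
  then show "rw_kernel V E p lam k l \<le> Gamma_adj V E (?\<rho> / dmin V E) k l"
    using assms(1,2) \<open>0 \<le> ?\<rho>\<close> \<open>k \<in> V\<close> \<open>l \<in> V\<close>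
    by (simp add: kernel Gamma_adj_eq_neumann_series_product) (intro sum_mono mult_mono, auto)
qed

end
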